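(* Let $v=(v_j)_{j\in\mathbb{N}}\in\mathbb{R}^{\mathbb{N}}$, $\omega_0\in\mathbb{R}^n$ and $m\in\mathbb{N}$. If there exists an integer $i\ge1$ such that $CB^{m+1}P_{i-1}(v)\omega_0\neq0$, then there exists $k_0\in\mathbb{N}$ such that for every integer $N\ge1$, the map $\phi:\mathbb{R}^{k_0+N}\to\mathbb{R}^N$, \[ \phi(w)=\big(CB^mP_{k_0}(w)\omega_0,\dots,CB^mP_{k_0+N-1}(w)\omega_0\big), \] has a differential of rank $N$ at $(v_0,\dots,v_{k_0+N-1})$.
   Context: Let $n\ge1$, $A,B\in\mathrm{End}(\mathbb{R}^n)$, $C\in\mathcal{L}(\mathbb{R}^n,\mathbb{R})$. Polynomials have commuting scalar indeterminates $X_0,X_1,\dots$ and coefficients in $\mathrm{End}(\mathbb{R}^n)$. Define the linear map $\Psi$ by $\Psi(P)(X_0,\dots,X_k)=P(X_0,\dots,X_{k-1})(A+X_0B)+\sum_{i=0}^{k-1}\frac{\partial P}{\partial X_i}(X_0,\dots,X_{k-1})X_{i+1}$, where $k$ is the least $\ell$ such that $P$ involves only $X_0,\dots,X_{\ell-1}$. Let $P_0=I$ and $P_{k+1}=\Psi(P_k)$, so $P_k$ is a polynomial in $X_0,\dots,X_{k-1}$. For a polynomial $P$ in $X_0,\dots,X_{k-1}$ and a sequence (or vector with at least $k$ entries) $v$, $P(v)=P(v_0,\dots,v_{k-1})$. *)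

theory Defs
  imports "HOL-Analysis.Derivative" "Jordan_Normal_Form.DL_Rank"
begin

text \<open>Endomorphisms of R^n are n x n real matrices (JNF type real mat), the
functional C is a 1 x n matrix, omega0 is a vector of dimension n.
A polynomial P in X_0, X_1, ... with matrix coefficients is represented by its
polynomial function on sequences v :: nat => real (so P(v) = P(v_0,...,v_(k-1))).
The formal partial derivative dP/dX_i evaluated at v is the entrywise derivative
of t |-> P(v(i:=t)) at t = v i.\<close>

definition pderiv_at :: "nat \<Rightarrow> ((nat \<Rightarrow> real) \<Rightarrow> real mat) \<Rightarrow> nat \<Rightarrow> (nat \<Rightarrow> real) \<Rightarrow> real mat" where
  "pderiv_at n P i v = mat n n (\<lambda>(r, c). deriv (\<lambda>t. P (v(i := t)) $$ (r, c)) (v i))"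

text \<open>Psi applied to a polynomial in X_0..X_(k-1) (variables of index >= k do not occur,
so their partial derivatives vanish and the sum may run over i < k).\<close>
definition Psi :: "nat \<Rightarrow> real mat \<Rightarrow> real mat \<Rightarrow> nat \<Rightarrow> ((nat \<Rightarrow> real) \<Rightarrow> real mat) \<Rightarrow> (nat \<Rightarrow> real) \<Rightarrow> real mat" where
  "Psi n A B k P v = mat n n (\<lambda>(r, c).
      (P v * (A + v 0 \<cdot>\<^sub>m B)) $$ (r, c)
      + (\<Sum>i<k. (pderiv_at n P i v) $$ (r, c) * v (Suc i)))"

fun Pk :: "nat \<Rightarrow> real mat \<Rightarrow> real mat \<Rightarrow> nat \<Rightarrow> (nat \<Rightarrow> real) \<Rightarrow> real mat" where
  "Pk n A B 0 = (\<lambda>v. 1\<^sub>m n)"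
| "Pk n A B (Suc k) = Psi n A B k (Pk n A B k)"

definition phi_jacobian :: "nat \<Rightarrow> real mat \<Rightarrow> real mat \<Rightarrow> real mat \<Rightarrow> real vec \<Rightarrow> nat \<Rightarrow> nat \<Rightarrow> nat \<Rightarrow> (nat \<Rightarrow> real) \<Rightarrow> real mat" where
  "phi_jacobian n A B C \<omega>0 m k0 N v = mat N (k0 + N) (\<lambda>(j, i).
      deriv (\<lambda>t. (C * B ^\<^sub>m m * Pk n A B (k0 + j) (v(i := t)) *\<^sub>v \<omega>0) $ 0) (v i))"

end

theory Submission
  imports Defs "HOL-Computational_Algebra.Polynomial" "Jordan_Normal_Form.DL_Rank_Submatrix"
begin

(* Differentiating \<Psi>(P) = P (A + X\<^sub>0 B) + \<Sum>\<^sub>i \<partial>\<^sub>i P X\<^sub>i\<^sub>+\<^sub>1 gives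
     \<partial>\<^sub>l \<Psi>(P) = \<Psi>(\<partial>\<^sub>l P) + [l = 0] P B + [l > 0] \<partial>\<^sub>l\<^sub>-\<^sub>1 P,
   and hence, by induction on k,
     \<partial>\<^sub>l P\<^sub>k = \<Sum>\<^sub>a\<^sub><\<^sub>k\<^sub>-\<^sub>l binom(a + l, l) \<Psi>\<^sup>a(P\<^sub>k\<^sub>-\<^sub>l\<^sub>-\<^sub>1\<^sub>-\<^sub>a B).
   So the Jacobian entry in row k and column l is q\<^sub>k\<^sub>-\<^sub>l(l) for polynomials q\<^sub>s of degree
   less than s, the coefficient of degree s - 1 of q\<^sub>s being C B\<^sup>m\<^sup>+\<^sup>1 P\<^sub>s\<^sub>-\<^sub>1(v) \<omega>\<^sub>0 / (s - 1)!.
   The hypothesis makes some q\<^sub>s nonzero. For the least such s and X beyond all natural roots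
   of q\<^sub>s, the choice k\<^sub>0 = X + s makes the columns X, ..., X + N - 1 a triangular minor with
   diagonal entries q\<^sub>s(X + j) \<noteq> 0. *)

inductive_set poly_fun :: "((nat \<Rightarrow> real) \<Rightarrow> real) set" where
  poly_fun_const: "(\<lambda>w. c) \<in> poly_fun"
| poly_fun_var: "(\<lambda>w. w i) \<in> poly_fun"
| poly_fun_add: "f \<in> poly_fun \<Longrightarrow> g \<in> poly_fun \<Longrightarrow> (\<lambda>w. f w + g w) \<in> poly_fun"
| poly_fun_mult: "f \<in> poly_fun \<Longrightarrow> g \<in> poly_fun \<Longrightarrow> (\<lambda>w. f w * g w) \<in> poly_fun"

definition partial :: "nat \<Rightarrow> ((nat \<Rightarrow> real) \<Rightarrow> real) \<Rightarrow> (nat \<Rightarrow> real) \<Rightarrow> real" where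
  "partial i f w = deriv (\<lambda>t. f (w(i := t))) (w i)"

lemma poly_fun_has_partial:
  assumes "f \<in> poly_fun"
  shows "\<exists>f'\<in>poly_fun. \<forall>w t. ((\<lambda>t. f (w(i := t))) has_real_derivative f' (w(i := t))) (at t)"
  using assms
proof induction
  case (poly_fun_const c)
  show ?case by (intro bexI[of _ "\<lambda>w. 0"]) (auto intro: poly_fun.intros)
next
  case (poly_fun_var j)
  show ?case
    by (intro bexI[of _ "\<lambda>w. if i = j then 1 else 0"])
       (auto intro!: poly_fun.intros derivative_eq_intros)
next
  case (poly_fun_add f g)
  then obtain f' g' where
    f': "f' \<in> poly_fun" "\<And>w t. ((\<lambda>t. f (w(i := t))) has_real_derivative f' (w(i := t))) (at t)" and
    g': "g' \<in> poly_fun" "\<And>w t. ((\<lambda>t. g (w(i := t))) has_real_derivative g' (w(i := t))) (at t)"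
    by blast
  show ?case
  proof (rule bexI[of _ "\<lambda>w. f' w + g' w"])
    show "\<forall>w t. ((\<lambda>t. f (w(i := t)) + g (w(i := t))) has_real_derivative f' (w(i := t)) + g' (w(i := t))) (at t)"
      using DERIV_add[OF f'(2) g'(2)] by blast
  qed (auto intro: poly_fun.intros f' g')
next
  case (poly_fun_mult f g)
  then obtain f' g' where
    f': "f' \<in> poly_fun" "\<And>w t. ((\<lambda>t. f (w(i := t))) has_real_derivative f' (w(i := t))) (at t)" and
    g': "g' \<in> poly_fun" "\<And>w t. ((\<lambda>t. g (w(i := t))) has_real_derivative g' (w(i := t))) (at t)"
    by blast
  show ?case
  proof (rule bexI[of _ "\<lambda>w. f' w * g w + f w * g' w"])
    show "\<forall>w t. ((\<lambda>t. f (w(i := t)) * g (w(i := t))) has_real_derivative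
        f' (w(i := t)) * g (w(i := t)) + f (w(i := t)) * g' (w(i := t))) (at t)"
      using DERIV_mult'[OF f'(2) g'(2)] by (simp add: algebra_simps)
  qed (auto intro!: poly_fun.intros f' g' poly_fun_mult)
qed

lemma partial_eqI:
  assumes "\<And>w t. ((\<lambda>t. f (w(i := t))) has_real_derivative f' (w(i := t))) (at t)"
  shows "partial i f = f'"
proof
  fix w
  show "partial i f w = f' w"
    using DERIV_imp_deriv[OF assms, of w "w i"] by (simp add: partial_def)
qed

lemma
  assumes "f \<in> poly_fun"
  shows has_real_derivative_partial:
      "((\<lambda>t. f (w(i := t))) has_real_derivative partial i f (w(i := t))) (at t)"
    and poly_fun_partial: "partial i f \<in> poly_fun"
proof -
  obtain f' where "f' \<in> poly_fun"
    and f': "\<And>w t. ((\<lambda>t. f (w(i := t))) has_real_derivative f' (w(i := t))) (at t)"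
    using poly_fun_has_partial[OF assms, of i] by blast
  moreover have "partial i f = f'"
    using f' by (rule partial_eqI)
  ultimately show "((\<lambda>t. f (w(i := t))) has_real_derivative partial i f (w(i := t))) (at t)"
    and "partial i f \<in> poly_fun" by simp_all
qed

lemma partial_const [simp]: "partial i (\<lambda>w. c) = (\<lambda>w. 0)"
  by (rule partial_eqI) auto

lemma partial_var: "partial i (\<lambda>w. w j) = (\<lambda>w. if i = j then 1 else 0)"
  by (rule partial_eqI) (auto intro!: derivative_eq_intros)

lemma partial_add:
  "f \<in> poly_fun \<Longrightarrow> g \<in> poly_fun \<Longrightarrow> partial i (\<lambda>w. f w + g w) = (\<lambda>w. partial i f w + partial i g w)"
  by (rule partial_eqI) (auto intro!: DERIV_add has_real_derivative_partial)

lemma partial_mult: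
  assumes "f \<in> poly_fun" "g \<in> poly_fun"
  shows "partial i (\<lambda>w. f w * g w) = (\<lambda>w. partial i f w * g w + f w * partial i g w)"
proof (rule partial_eqI)
  fix w t
  show "((\<lambda>t. f (w(i := t)) * g (w(i := t))) has_real_derivative
      partial i f (w(i := t)) * g (w(i := t)) + f (w(i := t)) * partial i g (w(i := t))) (at t)"
    using DERIV_mult'[OF has_real_derivative_partial[OF assms(1)] has_real_derivative_partial[OF assms(2)]]
    by (simp add: algebra_simps)
qed

lemma partial_cmult: "f \<in> poly_fun \<Longrightarrow> partial i (\<lambda>w. c * f w) = (\<lambda>w. c * partial i f w)"
  using partial_mult[of "\<lambda>w. c" f i] by (simp add: poly_fun.intros)

lemma partial_multc: "f \<in> poly_fun \<Longrightarrow> partial i (\<lambda>w. f w * c) = (\<lambda>w. partial i f w * c)"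
  using partial_mult[of f "\<lambda>w. c" i] by (simp add: poly_fun.intros)

lemma poly_fun_sum:
  "finite S \<Longrightarrow> (\<And>x. x \<in> S \<Longrightarrow> f x \<in> poly_fun) \<Longrightarrow> (\<lambda>w. \<Sum>x\<in>S. f x w) \<in> poly_fun"
  by (induction S rule: finite_induct) (auto intro: poly_fun.intros)

lemma partial_sum:
  "finite S \<Longrightarrow> (\<And>x. x \<in> S \<Longrightarrow> f x \<in> poly_fun) \<Longrightarrow>
    partial i (\<lambda>w. \<Sum>x\<in>S. f x w) = (\<lambda>w. \<Sum>x\<in>S. partial i (f x) w)"
proof (induction S rule: finite_induct)
  case (insert x F)
  then have "partial i (\<lambda>w. f x w + (\<Sum>x\<in>F. f x w)) = (\<lambda>w. partial i (f x) w + partial i (\<lambda>w. \<Sum>x\<in>F. f x w) w)"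
    by (intro partial_add) (auto intro: poly_fun_sum)
  with insert show ?case by simp
qed simp

lemma partial_commute: "f \<in> poly_fun \<Longrightarrow> partial i (partial j f) = partial j (partial i f)"
  by (induction rule: poly_fun.induct)
     (simp_all add: partial_var partial_add partial_mult poly_fun_partial poly_fun.intros
        if_distrib algebra_simps)

lemma poly_fun_affine: "(\<lambda>w. a + w i * b) \<in> poly_fun"
  by (intro poly_fun.intros)

lemma partial_affine: "partial l (\<lambda>w. a + w i * b) = (\<lambda>w. if l = i then b else 0)"
  by (simp add: partial_add partial_multc partial_var poly_fun.intros)

definition depends_only_on :: "nat \<Rightarrow> ((nat \<Rightarrow> real) \<Rightarrow> real) \<Rightarrow> bool" where
  "depends_only_on K f \<longleftrightarrow> (\<forall>w w'. (\<forall>i<K. w i = w' i) \<longrightarrow> f w = f w')"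

lemma partial_eq_0_if_depends_only_on:
  assumes "depends_only_on K f" "K \<le> i"
  shows "partial i f = (\<lambda>w. 0)"
proof
  fix w
  have "(\<lambda>t. f (w(i := t))) = (\<lambda>t. f w)"
    using assms unfolding depends_only_on_def by (intro ext) (metis fun_upd_other not_le)
  then show "partial i f w = 0" by (simp add: partial_def)
qed

lemma depends_only_on_partial:
  assumes "depends_only_on K f"
  shows "depends_only_on K (partial i f)"
proof (cases "K \<le> i")
  case True
  then show ?thesis
    using partial_eq_0_if_depends_only_on[OF assms] by (simp add: depends_only_on_def)
next
  case False
  show ?thesis unfolding depends_only_on_def partial_def
  proof (intro allI impI)
    fix w w' :: "nat \<Rightarrow> real"
    assume "\<forall>i<K. w i = w' i"
    with assms False have "(\<lambda>t. f (w(i := t))) = (\<lambda>t. f (w'(i := t)))" and "w i = w' i"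
      unfolding depends_only_on_def by auto
    then show "deriv (\<lambda>t. f (w(i := t))) (w i) = deriv (\<lambda>t. f (w'(i := t))) (w' i)" by simp
  qed
qed

definition shift_deriv :: "nat \<Rightarrow> ((nat \<Rightarrow> real) \<Rightarrow> real) \<Rightarrow> (nat \<Rightarrow> real) \<Rightarrow> real" where
  "shift_deriv K f w = (\<Sum>i<K. partial i f w * w (Suc i))"

lemma poly_fun_shift_deriv: "f \<in> poly_fun \<Longrightarrow> shift_deriv K f \<in> poly_fun"
  unfolding shift_deriv_def[abs_def]
  by (auto intro!: poly_fun_sum poly_fun.intros poly_fun_partial)

lemma depends_only_on_shift_deriv:
  assumes "depends_only_on K f"
  shows "depends_only_on (Suc K) (shift_deriv K f)"
  using depends_only_on_partial[OF assms] unfolding depends_only_on_def shift_deriv_def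
  by (auto intro!: sum.cong)

lemma shift_deriv_mono:
  assumes "depends_only_on K f" "K \<le> K'"
  shows "shift_deriv K' f = shift_deriv K f"
proof
  fix w
  show "shift_deriv K' f w = shift_deriv K f w"
    unfolding shift_deriv_def
    by (rule sum.mono_neutral_left[symmetric])
       (use assms partial_eq_0_if_depends_only_on in auto)
qed

lemma shift_deriv_sum:
  assumes "finite S" "\<And>j. j \<in> S \<Longrightarrow> f j \<in> poly_fun"
  shows "shift_deriv K (\<lambda>w. \<Sum>j\<in>S. a j * f j w) w = (\<Sum>j\<in>S. a j * shift_deriv K (f j) w)"
proof -
  have "partial i (\<lambda>w. \<Sum>j\<in>S. a j * f j w) = (\<lambda>w. \<Sum>j\<in>S. a j * partial i (f j) w)" for i
    using assms by (simp add: partial_sum partial_cmult poly_fun.intros)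
  then show ?thesis
    unfolding shift_deriv_def
    by (simp add: sum_distrib_left sum_distrib_right mult.assoc sum.swap[of _ S])
qed

lemma partial_shift_deriv:
  assumes f: "f \<in> poly_fun" "depends_only_on K f"
  shows "partial l (shift_deriv K f) =
    (\<lambda>w. shift_deriv K (partial l f) w + (if l = 0 then 0 else partial (l - 1) f w))"
proof
  fix w
  have "partial l (shift_deriv K f) w =
      (\<Sum>i<K. partial i (partial l f) w * w (Suc i) + partial i f w * (if l = Suc i then 1 else 0))"
    unfolding shift_deriv_def[abs_def] using f
    by (simp add: partial_sum partial_mult partial_var partial_commute poly_fun_partial poly_fun.intros)
  moreover have "(\<Sum>i<K. partial i f w * (if l = Suc i then 1 else 0)) = (if l = 0 then 0 else partial (l - 1) f w)"
  proof (cases "l = 0 \<or> K < l")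
    case True
    then show ?thesis
      using partial_eq_0_if_depends_only_on[OF f(2), of "l - 1"] by auto
  next
    case False
    then have "(\<Sum>i<K. partial i f w * (if l = Suc i then 1 else 0)) = (\<Sum>i\<in>{l - 1}. partial i f w)"
      by (intro sum.mono_neutral_cong_right) auto
    with False show ?thesis by simp
  qed
  ultimately show "partial l (shift_deriv K f) w
      = shift_deriv K (partial l f) w + (if l = 0 then 0 else partial (l - 1) f w)"
    by (simp add: sum.distrib shift_deriv_def)
qed

fun binom_poly :: "nat \<Rightarrow> real poly" where
  "binom_poly 0 = 1"
| "binom_poly (Suc a) = Polynomial.smult (1 / real (Suc a)) ([:real (Suc a), 1:] * binom_poly a)"

lemma poly_binom_poly: "poly (binom_poly a) (real x) = real ((x + a) choose a)"
proof (induction a)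
  case (Suc a)
  have "real (x + a + 1) * real ((x + a) choose a) = real ((x + Suc a) choose Suc a) * real (Suc a)"
    using Suc_times_binomial_eq[of "x + a" a] by (metis add.commute plus_1_eq_Suc add_Suc_right of_nat_mult)
  then have "real ((x + Suc a) choose Suc a) = real (x + a + 1) * real ((x + a) choose a) / real (Suc a)"
    by (simp only: eq_divide_eq) simp
  moreover have "poly (binom_poly (Suc a)) (real x)
      = 1 / real (Suc a) * ((real (Suc a) + real x) * poly (binom_poly a) (real x))"
    by (simp only: binom_poly.simps poly_smult poly_mult) simp
  ultimately show ?case
    using Suc by simp
qed simp

lemma degree_coeff_binom_poly: "Polynomial.degree (binom_poly a) = a \<and> Polynomial.coeff (binom_poly a) a = 1 / fact a"
proof (induction a)
  case (Suc a)
  then have "binom_poly a \<noteq> 0" by auto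
  then have "Polynomial.degree ([:real (Suc a), 1:] * binom_poly a) = Suc a"
    using Suc by (subst degree_mult_eq) auto
  moreover have "Polynomial.coeff ([:real (Suc a), 1:] * binom_poly a) (Suc a) = 1 / fact a"
    using coeff_mult_degree_sum[of "[:real (Suc a), 1:]" "binom_poly a"] Suc by simp
  ultimately show ?case
    by (simp add: degree_smult_eq fact_Suc del: of_nat_Suc)
qed simp

definition binom_comb :: "(nat \<Rightarrow> nat \<Rightarrow> real) \<Rightarrow> nat \<Rightarrow> real poly" where
  "binom_comb c s = (\<Sum>a<s. Polynomial.smult (c a (s - 1 - a)) (binom_poly a))"

lemma binom_comb_0 [simp]: "binom_comb c 0 = 0"
  by (simp add: binom_comb_def)

lemma poly_binom_comb: "poly (binom_comb c s) (real x) = (\<Sum>a<s. real ((a + x) choose x) * c a (s - 1 - a))"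
proof -
  have "(x + a) choose a = (a + x) choose x" for a
    by (metis add.commute add_diff_cancel_left' binomial_symmetric le_add1)
  then show ?thesis
    by (simp add: binom_comb_def poly_sum poly_binom_poly mult.commute)
qed

lemma binom_comb_nonzero:
  assumes "c d 0 \<noteq> 0"
  shows "binom_comb c (Suc d) \<noteq> 0"
proof -
  have "Polynomial.coeff (binom_comb c (Suc d)) d = (\<Sum>a<Suc d. c a (d - a) * Polynomial.coeff (binom_poly a) d)"
    by (simp add: binom_comb_def coeff_sum)
  also have "\<dots> = (\<Sum>a\<in>{d}. c a (d - a) * Polynomial.coeff (binom_poly a) d)"
    by (rule sum.mono_neutral_right) (auto intro!: coeff_eq_0 simp: degree_coeff_binom_poly)
  also have "\<dots> = c d 0 / fact d"
    using degree_coeff_binom_poly[of d] by simp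
  finally show ?thesis
    using assms by auto
qed

lemma eventually_poly_of_nat_nonzero:
  fixes p :: "real poly"
  assumes "p \<noteq> 0"
  shows "\<exists>X. \<forall>x\<ge>X. poly p (real x) \<noteq> 0"
proof -
  have "\<forall>\<^sub>F x in at_top. poly p x \<noteq> 0"
    using filter_leD[OF at_top_le_at_infinity poly_eventually_not_zero[OF assms]] .
  then have "\<forall>\<^sub>F x in sequentially. poly p (real x) \<noteq> 0"
    using filterlim_real_sequentially by (rule eventually_compose_filterlim)
  then show ?thesis
    by (simp add: eventually_sequentially)
qed

lemma (in vec_space) rank_le_nr:
  assumes "A \<in> carrier_mat n nc"
  shows "rank A \<le> n"
proof -
  have "set (cols A) \<subseteq> carrier_vec n"
    using assms cols_dim by (metis carrier_matD(1))
  then have "subspace class_ring (span (set (cols A))) V"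
    by (intro span_is_subspace)
  then have "vectorspace.dim class_ring (span_vs (set (cols A))) \<le> dim"
    using subspace_dim fin_dim fin_dim_span_cols[OF assms] by blast
  then show ?thesis
    unfolding rank_def dim_is_n .
qed

lemma rank_eq_if_triangular_minor:
  fixes M :: "'a :: field mat"
  assumes M: "M \<in> carrier_mat N nc" and "b + N \<le> nc"
    and upper: "\<And>i j. i < j \<Longrightarrow> j < N \<Longrightarrow> M $$ (i, b + j) = 0"
    and diag: "\<And>i. i < N \<Longrightarrow> M $$ (i, b + i) \<noteq> 0"
  shows "vec_space.rank N M = N"
proof -
  define S where "S = submatrix M UNIV {b..<b + N}"
  have cols: "{j. j < nc \<and> j \<in> {b..<b + N}} = {b..<b + N}"
    using \<open>b + N \<le> nc\<close> by auto
  have rows: "card {i. i < N \<and> i \<in> (UNIV :: nat set)} = N"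
    by simp
  have S: "S \<in> carrier_mat N N"
    unfolding S_def submatrix_def using M cols rows by auto
  have pick: "pick {b..<b + N} j = b + j" if "j < N" for j
    using that
  proof (induction j)
    case 0
    then show ?case by (auto intro: Least_equality)
  next
    case (Suc j)
    then show ?case by (auto intro!: Least_equality)
  qed
  have S_index: "S $$ (i, j) = M $$ (i, b + j)" if "i < N" "j < N" for i j
    unfolding S_def using that M cols rows
    by (subst submatrix_index) (auto simp: pick_UNIV pick)
  have "det S = (\<Prod>i = 0..<N. S $$ (i, i))"
    using det_lower_triangular[OF _ S] S upper S_index by (simp add: prod_list_diag_prod)
  also have "\<dots> \<noteq> 0"
    using diag S_index by auto
  finally have "N \<le> vec_space.rank N M"
    using vec_space.rank_gt_minor[OF M] cols unfolding S_def by fastforce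
  with vec_space.rank_le_nr[OF M] show ?thesis
    by simp
qed

(* Entries to the right of the staircase see q 0 through truncated subtraction. *)
lemma rank_staircase:
  fixes q :: "nat \<Rightarrow> real poly"
  assumes "q 0 = 0" "q s \<noteq> 0"
  shows "\<exists>k0. \<forall>N. vec_space.rank N (mat N (k0 + N) (\<lambda>(j, i). poly (q (k0 + j - i)) (real i))) = N"
proof -
  define s0 where "s0 = (LEAST s. q s \<noteq> 0)"
  have q_s0: "q s0 \<noteq> 0"
    unfolding s0_def using assms(2) by (rule LeastI)
  have below: "q s = 0" if "s < s0" for s
    using that not_less_Least unfolding s0_def by blast
  obtain X0 where X0: "\<And>x. X0 \<le> x \<Longrightarrow> poly (q s0) (real x) \<noteq> 0"
    using eventually_poly_of_nat_nonzero[OF q_s0] by blast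
  have "vec_space.rank N (mat N (X0 + s0 + N) (\<lambda>(j, i). poly (q (X0 + s0 + j - i)) (real i))) = N" for N
  proof (rule rank_eq_if_triangular_minor[where b = X0])
    fix i j
    assume "i < j" "j < N"
    then show "mat N (X0 + s0 + N) (\<lambda>(j, i). poly (q (X0 + s0 + j - i)) (real i)) $$ (i, X0 + j) = 0"
      using below[of "s0 + i - j"] assms(1) by (cases "j \<le> s0 + i") auto
  qed (use X0[OF le_add1] in auto)
  then show ?thesis
    by blast
qed

lemma sum_antidiagonal_Suc:
  fixes g :: "nat \<Rightarrow> nat \<Rightarrow> real"
  shows "(\<Sum>a<s. g (Suc a) (s - 1 - a)) + g 0 s = (\<Sum>a<Suc s. g a (s - a))"
  by (simp add: sum.lessThan_Suc_shift del: sum.lessThan_Suc)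

lemma sum_antidiagonal_pascal:
  fixes g :: "nat \<Rightarrow> nat \<Rightarrow> real"
  assumes "0 < l"
  shows "(\<Sum>a<s. real (a + l choose l) * g (Suc a) (s - 1 - a))
      + (\<Sum>a<Suc s. real (a + (l - 1) choose (l - 1)) * g a (s - a))
    = (\<Sum>a<Suc s. real (a + l choose l) * g a (s - a))"
proof -
  obtain l' where "l = Suc l'"
    using assms gr0_implies_Suc by blast
  then show ?thesis
    by (simp add: sum.lessThan_Suc_shift sum.distrib algebra_simps del: sum.lessThan_Suc)
qed

type_synonym mat_fun = "nat \<Rightarrow> nat \<Rightarrow> (nat \<Rightarrow> real) \<Rightarrow> real"

locale Psi_operator =
  fixes n :: nat and A B :: "real mat"
  assumes A: "A \<in> carrier_mat n n" and B: "B \<in> carrier_mat n n"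
begin

definition psi :: "nat \<Rightarrow> mat_fun \<Rightarrow> mat_fun" where
  "psi K F = (\<lambda>r c w. (\<Sum>t<n. F r t w * (A $$ (t, c) + w 0 * B $$ (t, c))) + shift_deriv K (F r c) w)"

fun pk :: "nat \<Rightarrow> mat_fun" where
  "pk 0 = (\<lambda>r c w. if r = c then 1 else 0)"
| "pk (Suc k) = psi k (pk k)"

definition poly_entries :: "mat_fun \<Rightarrow> bool" where
  "poly_entries F \<longleftrightarrow> (\<forall>r<n. \<forall>c<n. F r c \<in> poly_fun)"

definition entries_depend_only_on :: "nat \<Rightarrow> mat_fun \<Rightarrow> bool" where
  "entries_depend_only_on K F \<longleftrightarrow> (\<forall>r<n. \<forall>c<n. depends_only_on K (F r c))"

definition mult_B :: "mat_fun \<Rightarrow> mat_fun" where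
  "mult_B F = (\<lambda>r c w. \<Sum>t<n. F r t w * B $$ (t, c))"

definition mult_left :: "real mat \<Rightarrow> mat_fun \<Rightarrow> mat_fun" where
  "mult_left Y F = (\<lambda>r c w. \<Sum>t<n. Y $$ (r, t) * F t c w)"

lemma poly_entries_psi:
  assumes "poly_entries F"
  shows "poly_entries (psi K F)"
  unfolding poly_entries_def
proof (intro allI impI)
  fix r c
  assume "r < n" "c < n"
  then have "F r t \<in> poly_fun" if "t < n" for t
    using assms that by (simp add: poly_entries_def)
  then show "psi K F r c \<in> poly_fun"
    unfolding psi_def using \<open>c < n\<close>
    by (auto intro!: poly_fun_add poly_fun_sum poly_fun_mult poly_fun_affine poly_fun_shift_deriv)
qed

lemma entries_depend_only_on_psi:
  assumes "entries_depend_only_on K F"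
  shows "entries_depend_only_on (Suc K) (psi K F)"
  unfolding entries_depend_only_on_def depends_only_on_def
proof (intro allI impI)
  fix r c w w'
  assume rc: "r < n" "c < n" and ww': "\<forall>i<Suc K. w i = (w' i :: real)"
  have dep: "depends_only_on K (F r t)" if "t < n" for t
    using assms rc that by (simp add: entries_depend_only_on_def)
  have "\<forall>i<K. w i = w' i"
    using ww' by simp
  then have "F r t w = F r t w'" if "t < n" for t
    using dep[OF that] by (simp add: depends_only_on_def)
  moreover have "shift_deriv K (F r c) w = shift_deriv K (F r c) w'"
    using depends_only_on_shift_deriv[OF dep[OF rc(2)]] ww' by (simp add: depends_only_on_def)
  ultimately show "psi K F r c w = psi K F r c w'"
    using ww' by (simp add: psi_def)
qed

lemma psi_cong_row:
  "(\<And>c. c < n \<Longrightarrow> F r c = F' r c) \<Longrightarrow> c < n \<Longrightarrow> psi K F r c = psi K F' r c"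
  unfolding psi_def by simp

lemma psi_mono:
  assumes "entries_depend_only_on K F" "K \<le> K'" "r < n" "c < n"
  shows "psi K' F r c = psi K F r c"
  using shift_deriv_mono[of K "F r c" K'] assms by (simp add: psi_def entries_depend_only_on_def)

lemma psi_sum:
  assumes "finite S" "\<And>j. j \<in> S \<Longrightarrow> poly_entries (F j)" "r < n" "c < n"
  shows "psi K (\<lambda>r c w. \<Sum>j\<in>S. a j * F j r c w) r c w = (\<Sum>j\<in>S. a j * psi K (F j) r c w)"
proof -
  have "(\<Sum>t<n. (\<Sum>j\<in>S. a j * F j r t w) * (A $$ (t, c) + w 0 * B $$ (t, c)))
      = (\<Sum>j\<in>S. a j * (\<Sum>t<n. F j r t w * (A $$ (t, c) + w 0 * B $$ (t, c))))"
    by (simp add: sum_distrib_left sum_distrib_right mult.assoc sum.swap[of _ S])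
  moreover have "shift_deriv K (\<lambda>w. \<Sum>j\<in>S. a j * F j r c w) w = (\<Sum>j\<in>S. a j * shift_deriv K (F j r c) w)"
    using assms by (intro shift_deriv_sum) (auto simp: poly_entries_def)
  ultimately show ?thesis
    by (simp add: psi_def sum.distrib distrib_left)
qed

lemma psi_mult_left:
  assumes "poly_entries F" "r < n" "c < n"
  shows "psi K (mult_left Y F) r c = mult_left Y (psi K F) r c"
proof
  fix w
  have "psi K (mult_left Y F) r c = psi K (\<lambda>_ c w. \<Sum>u<n. Y $$ (r, u) * F u c w) r c"
    using assms by (intro psi_cong_row) (simp_all add: mult_left_def)
  then have "psi K (mult_left Y F) r c w = psi K (\<lambda>_ c w. \<Sum>u<n. Y $$ (r, u) * F u c w) r c w"
    by simp
  also have "\<dots> = (\<Sum>u<n. Y $$ (r, u) * psi K (\<lambda>_. F u) r c w)"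
    using assms by (intro psi_sum) (auto simp: poly_entries_def)
  also have "\<dots> = mult_left Y (psi K F) r c w"
    by (simp add: mult_left_def psi_def)
  finally show "psi K (mult_left Y F) r c w = mult_left Y (psi K F) r c w" .
qed

lemma partial_psi:
  assumes F: "poly_entries F" "entries_depend_only_on K F" and rc: "r < n" "c < n"
  shows "partial l (psi K F r c) = (\<lambda>w. psi K (\<lambda>r c. partial l (F r c)) r c w
    + (if l = 0 then mult_B F r c w else partial (l - 1) (F r c) w))"
proof -
  define M where "M t w = A $$ (t, c) + w 0 * B $$ (t, c)" for t and w :: "nat \<Rightarrow> real"
  have poly: "F r t \<in> poly_fun" if "t < n" for t
    using F rc that by (simp add: poly_entries_def)
  have M: "M t \<in> poly_fun" "partial l (M t) = (\<lambda>w. if l = 0 then B $$ (t, c) else 0)" for t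
    unfolding M_def[abs_def] by (simp_all add: poly_fun_affine partial_affine)
  have "partial l (\<lambda>w. \<Sum>t<n. F r t w * M t w) = (\<lambda>w. \<Sum>t<n. partial l (\<lambda>w. F r t w * M t w) w)"
    by (rule partial_sum) (auto intro!: poly_fun_mult poly M)
  also have "\<dots> = (\<lambda>w. \<Sum>t<n. partial l (F r t) w * M t w + (if l = 0 then F r t w * B $$ (t, c) else 0))"
    by (intro ext sum.cong refl) (simp add: partial_mult poly M)
  finally have right_mult: "partial l (\<lambda>w. \<Sum>t<n. F r t w * M t w)
      = (\<lambda>w. (\<Sum>t<n. partial l (F r t) w * M t w) + (if l = 0 then mult_B F r c w else 0))"
    by (cases "l = 0") (simp_all add: sum.distrib mult_B_def)
  have drift: "partial l (shift_deriv K (F r c)) = (\<lambda>w. shift_deriv K (partial l (F r c)) w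
      + (if l = 0 then 0 else partial (l - 1) (F r c) w))"
    using F rc by (intro partial_shift_deriv) (auto simp: poly_entries_def entries_depend_only_on_def)
  have psi_eq: "psi K F r c = (\<lambda>w. (\<Sum>t<n. F r t w * M t w) + shift_deriv K (F r c) w)"
    by (simp add: psi_def M_def)
  have "partial l (\<lambda>w. (\<Sum>t<n. F r t w * M t w) + shift_deriv K (F r c) w)
      = (\<lambda>w. partial l (\<lambda>w. \<Sum>t<n. F r t w * M t w) w + partial l (shift_deriv K (F r c)) w)"
    using poly rc by (intro partial_add) (auto intro!: poly_fun_sum poly_fun_mult M poly_fun_shift_deriv)
  then show ?thesis
    unfolding psi_eq right_mult drift by (cases "l = 0") (simp_all add: psi_def M_def ac_simps)
qed

lemma poly_entries_pk: "poly_entries (pk k)"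
proof (induction k)
  case 0
  then show ?case by (simp add: poly_entries_def poly_fun_const)
qed (simp add: poly_entries_psi)

lemma entries_depend_only_on_pk: "entries_depend_only_on k (pk k)"
proof (induction k)
  case 0
  then show ?case by (simp add: entries_depend_only_on_def depends_only_on_def)
qed (simp add: entries_depend_only_on_psi)

(* Psi_iter a b = \<Psi>\<^sup>a(P\<^sub>b B); the index a + b bounds the variables involved. *)
fun Psi_iter :: "nat \<Rightarrow> nat \<Rightarrow> mat_fun" where
  "Psi_iter 0 b = mult_B (pk b)"
| "Psi_iter (Suc a) b = psi (a + b) (Psi_iter a b)"

lemma poly_entries_Psi_iter: "poly_entries (Psi_iter a b)"
proof (induction a)
  case 0
  then show ?case
    using poly_entries_pk[of b]
    by (auto simp: poly_entries_def mult_B_def intro!: poly_fun_sum poly_fun_mult poly_fun.intros)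
qed (simp add: poly_entries_psi)

lemma entries_depend_only_on_Psi_iter: "entries_depend_only_on (a + b) (Psi_iter a b)"
proof (induction a)
  case 0
  then show ?case
    using entries_depend_only_on_pk[of b]
    unfolding entries_depend_only_on_def depends_only_on_def
    by (auto simp: mult_B_def intro!: sum.cong)
qed (simp add: entries_depend_only_on_psi)

definition binom_sum :: "nat \<Rightarrow> nat \<Rightarrow> mat_fun" where
  "binom_sum l s = (\<lambda>r c w. \<Sum>a<s. real ((a + l) choose l) * Psi_iter a (s - 1 - a) r c w)"

lemma psi_binom_sum:
  assumes "s \<le> Suc K" "r < n" "c < n"
  shows "psi K (binom_sum l s) r c w = (\<Sum>a<s. real ((a + l) choose l) * Psi_iter (Suc a) (s - 1 - a) r c w)"
proof -
  have "psi K (binom_sum l s) r c w = (\<Sum>a<s. real ((a + l) choose l) * psi K (Psi_iter a (s - 1 - a)) r c w)"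
    unfolding binom_sum_def using assms by (intro psi_sum) (auto simp: poly_entries_Psi_iter)
  also have "\<dots> = (\<Sum>a<s. real ((a + l) choose l) * Psi_iter (Suc a) (s - 1 - a) r c w)"
  proof (intro sum.cong refl)
    fix a
    assume "a \<in> {..<s}"
    then have "psi K (Psi_iter a (s - 1 - a)) r c = psi (a + (s - 1 - a)) (Psi_iter a (s - 1 - a)) r c"
      using assms by (intro psi_mono entries_depend_only_on_Psi_iter) auto
    then show "real ((a + l) choose l) * psi K (Psi_iter a (s - 1 - a)) r c w
        = real ((a + l) choose l) * Psi_iter (Suc a) (s - 1 - a) r c w"
      by simp
  qed
  finally show ?thesis .
qed

lemma partial_pk:
  assumes "r < n" "c < n"
  shows "partial l (pk k r c) = binom_sum l (k - l) r c"
  using assms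
proof (induction k arbitrary: l r c)
  case 0
  then show ?case by (simp add: binom_sum_def)
next
  case (Suc k)
  have step: "partial l (pk (Suc k) r c) w
      = (\<Sum>a<k - l. real ((a + l) choose l) * Psi_iter (Suc a) (k - l - 1 - a) r c w)
        + (if l = 0 then Psi_iter 0 k r c w else binom_sum (l - 1) (k - (l - 1)) r c w)" for w
  proof -
    have "psi k (\<lambda>r c. partial l (pk k r c)) r c = psi k (binom_sum l (k - l)) r c"
      using Suc by (intro psi_cong_row) auto
    then show ?thesis
      using partial_psi[OF poly_entries_pk entries_depend_only_on_pk Suc.prems, of l]
        psi_binom_sum[of "k - l" k r c l w] Suc
      by simp
  qed
  show ?case
  proof
    fix w
    consider "l = 0" | "0 < l" "l \<le> k" | "k < l"
      by linarith
    then show "partial l (pk (Suc k) r c) w = binom_sum l (Suc k - l) r c w"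
    proof cases
      case 1
      then show ?thesis
        using step sum_antidiagonal_Suc[of "\<lambda>a b. Psi_iter a b r c w" k]
        by (simp add: binom_sum_def)
    next
      case 2
      then have "k - (l - 1) = Suc (k - l)" "Suc k - l = Suc (k - l)"
        by auto
      with 2 show ?thesis
        using step sum_antidiagonal_pascal[of l "\<lambda>a b. Psi_iter a b r c w" "k - l"]
        by (simp add: binom_sum_def del: binomial_Suc_Suc Psi_iter.simps)
    next
      case 3
      then show ?thesis
        using step by (simp add: binom_sum_def)
    qed
  qed
qed

lemma Psi_iter_lead: "r < n \<Longrightarrow> c < n \<Longrightarrow> Psi_iter a 0 r c = mult_left B (pk a) r c"
proof (induction a arbitrary: r c)
  case 0
  have "(\<Sum>t<n. (if r = t then 1 else 0) * B $$ (t, c)) = B $$ (r, c)"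
    and "(\<Sum>t<n. B $$ (r, t) * (if t = c then 1 else 0)) = B $$ (r, c)"
    using 0 by (simp_all add: if_distrib[of "\<lambda>x. x * _"] if_distrib[of "\<lambda>x. _ * x"] cong: if_cong)
  then show ?case
    by (simp add: mult_B_def mult_left_def)
next
  case (Suc a)
  have "Psi_iter (Suc a) 0 r c = psi a (mult_left B (pk a)) r c"
    using Suc by (auto intro: psi_cong_row)
  also have "\<dots> = mult_left B (pk (Suc a)) r c"
    using Suc.prems by (simp add: psi_mult_left poly_entries_pk)
  finally show ?case .
qed

end

lemma index_mult_mat_sum:
  assumes "X \<in> carrier_mat a n" "Y \<in> carrier_mat n b" "r < a" "c < b"
  shows "(X * Y) $$ (r, c) = (\<Sum>t<n. X $$ (r, t) * Y $$ (t, c))"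
  using assms by (simp add: scalar_prod_def lessThan_atLeast0)

context Psi_operator
begin

lemma Pk_carrier: "Pk n A B k w \<in> carrier_mat n n"
  by (cases k) (simp_all add: Psi_def)

lemma index_Pk: "r < n \<Longrightarrow> c < n \<Longrightarrow> Pk n A B k w $$ (r, c) = pk k r c w"
proof (induction k arbitrary: w r c)
  case (Suc k)
  have M: "A + w 0 \<cdot>\<^sub>m B \<in> carrier_mat n n"
    using A B by simp
  have "(Pk n A B k w * (A + w 0 \<cdot>\<^sub>m B)) $$ (r, c)
      = (\<Sum>t<n. Pk n A B k w $$ (r, t) * (A + w 0 \<cdot>\<^sub>m B) $$ (t, c))"
    by (rule index_mult_mat_sum[OF Pk_carrier M Suc.prems])
  also have "\<dots> = (\<Sum>t<n. pk k r t w * (A $$ (t, c) + w 0 * B $$ (t, c)))"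
    using A B Suc.prems by (intro sum.cong refl) (simp add: Suc.IH)
  moreover have "pderiv_at n (Pk n A B k) i w $$ (r, c) = partial i (pk k r c) w" for i
    using Suc.prems by (simp add: pderiv_at_def partial_def Suc.IH fun_upd_def)
  ultimately show ?case
    using Suc.prems by (simp add: Psi_def psi_def shift_deriv_def)
qed simp

definition sandwich :: "real mat \<Rightarrow> mat_fun \<Rightarrow> real vec \<Rightarrow> (nat \<Rightarrow> real) \<Rightarrow> real" where
  "sandwich L F \<omega> w = (\<Sum>r<n. \<Sum>c<n. L $$ (0, r) * F r c w * \<omega> $ c)"

lemma index_mult_mat_vec_sandwich:
  assumes "L \<in> carrier_mat 1 n" "X \<in> carrier_mat n n" "\<omega> \<in> carrier_vec n"
    and "\<And>r c. r < n \<Longrightarrow> c < n \<Longrightarrow> X $$ (r, c) = F r c w"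
  shows "(L * X *\<^sub>v \<omega>) $ 0 = sandwich L F \<omega> w"
proof -
  have "(L * X *\<^sub>v \<omega>) $ 0 = (\<Sum>r<n. L $$ (0, r) * (\<Sum>c<n. X $$ (r, c) * \<omega> $ c))"
    using assms by (simp add: scalar_prod_def lessThan_atLeast0)
  then show ?thesis
    using assms(4) by (simp add: sandwich_def sum_distrib_left mult.assoc)
qed

lemma partial_sandwich:
  assumes "poly_entries F"
  shows "partial i (sandwich L F \<omega>) = sandwich L (\<lambda>r c. partial i (F r c)) \<omega>"
proof -
  have poly: "F r c \<in> poly_fun" if "r < n" "c < n" for r c
    using assms that by (simp add: poly_entries_def)
  have row: "partial i (\<lambda>w. \<Sum>c<n. L $$ (0, r) * F r c w * \<omega> $ c)
      = (\<lambda>w. \<Sum>c<n. L $$ (0, r) * partial i (F r c) w * \<omega> $ c)" if "r < n" for r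
  proof -
    have "partial i (\<lambda>w. \<Sum>c<n. L $$ (0, r) * F r c w * \<omega> $ c)
        = (\<lambda>w. \<Sum>c<n. partial i (\<lambda>w. L $$ (0, r) * F r c w * \<omega> $ c) w)"
      by (rule partial_sum) (auto intro!: poly_fun_mult poly_fun_const poly that)
    also have "\<dots> = (\<lambda>w. \<Sum>c<n. L $$ (0, r) * partial i (F r c) w * \<omega> $ c)"
      using that by (intro ext sum.cong refl) (simp add: partial_cmult partial_multc poly_fun_mult poly_fun_const poly)
    finally show ?thesis .
  qed
  have "partial i (sandwich L F \<omega>)
      = (\<lambda>w. \<Sum>r<n. partial i (\<lambda>w. \<Sum>c<n. L $$ (0, r) * F r c w * \<omega> $ c) w)"
    unfolding sandwich_def[abs_def]
    by (rule partial_sum) (auto intro!: poly_fun_sum poly_fun_mult poly_fun_const poly)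
  also have "\<dots> = sandwich L (\<lambda>r c. partial i (F r c)) \<omega>"
    unfolding sandwich_def[abs_def] by (intro ext sum.cong refl) (simp add: row)
  finally show ?thesis .
qed

lemma sandwich_binom_sum:
  "sandwich L (binom_sum l s) \<omega> w
    = (\<Sum>a<s. real ((a + l) choose l) * sandwich L (Psi_iter a (s - 1 - a)) \<omega> w)"
proof -
  define f where "f a = real ((a + l) choose l)" for a
  define g where "g a r c = L $$ (0, r) * Psi_iter a (s - 1 - a) r c w * \<omega> $ c" for a r c
  have "sandwich L (binom_sum l s) \<omega> w = (\<Sum>r<n. \<Sum>c<n. \<Sum>a<s. f a * g a r c)"
    unfolding sandwich_def binom_sum_def f_def g_def
    by (intro sum.cong refl) (simp add: sum_distrib_left sum_distrib_right ac_simps)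
  also have "\<dots> = (\<Sum>r<n. \<Sum>a<s. \<Sum>c<n. f a * g a r c)"
    by (intro sum.cong refl sum.swap)
  also have "\<dots> = (\<Sum>a<s. \<Sum>r<n. \<Sum>c<n. f a * g a r c)"
    by (rule sum.swap)
  also have "\<dots> = (\<Sum>a<s. f a * sandwich L (Psi_iter a (s - 1 - a)) \<omega> w)"
    unfolding sandwich_def g_def by (simp add: sum_distrib_left ac_simps)
  finally show ?thesis
    unfolding f_def .
qed

lemma deriv_phi:
  assumes L: "L \<in> carrier_mat 1 n" and \<omega>: "\<omega> \<in> carrier_vec n"
  shows "deriv (\<lambda>t. (L * Pk n A B k (v(i := t)) *\<^sub>v \<omega>) $ 0) (v i)
    = poly (binom_comb (\<lambda>a b. sandwich L (Psi_iter a b) \<omega> v) (k - i)) (real i)"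
proof -
  have "(L * Pk n A B k w *\<^sub>v \<omega>) $ 0 = sandwich L (pk k) \<omega> w" for w
    by (rule index_mult_mat_vec_sandwich[OF L Pk_carrier \<omega> index_Pk])
  then have "deriv (\<lambda>t. (L * Pk n A B k (v(i := t)) *\<^sub>v \<omega>) $ 0) (v i)
      = partial i (sandwich L (pk k) \<omega>) v"
    by (simp add: partial_def)
  also have "\<dots> = sandwich L (binom_sum i (k - i)) \<omega> v"
    by (simp add: partial_sandwich poly_entries_pk partial_pk sandwich_def)
  also have "\<dots> = poly (binom_comb (\<lambda>a b. sandwich L (Psi_iter a b) \<omega> v) (k - i)) (real i)"
    by (simp add: sandwich_binom_sum poly_binom_comb)
  finally show ?thesis .
qed

lemma sandwich_Psi_iter_lead:
  assumes L: "L \<in> carrier_mat 1 n" and \<omega>: "\<omega> \<in> carrier_vec n"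
  shows "sandwich L (Psi_iter a 0) \<omega> v = (L * B * Pk n A B a v *\<^sub>v \<omega>) $ 0"
proof -
  have "L * B * Pk n A B a v = L * (B * Pk n A B a v)"
    using L B Pk_carrier by (rule assoc_mult_mat)
  moreover have "(B * Pk n A B a v) $$ (r, c) = Psi_iter a 0 r c v" if "r < n" "c < n" for r c
    using that B by (simp add: index_mult_mat_sum[OF B Pk_carrier] index_Pk Psi_iter_lead mult_left_def)
  ultimately show ?thesis
    using index_mult_mat_vec_sandwich[OF L _ \<omega>, of "B * Pk n A B a v"] B Pk_carrier by simp
qed

end

theorem corollary4:
  fixes n m :: nat and A B C :: "real mat" and \<omega>0 :: "real vec" and v :: "nat \<Rightarrow> real"
  assumes "n \<ge> 1"
    and "A \<in> carrier_mat n n" and "B \<in> carrier_mat n n" and "C \<in> carrier_mat 1 n"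
    and "\<omega>0 \<in> carrier_vec n"
    and "\<exists>i\<ge>1. (C * B ^\<^sub>m (m + 1) * Pk n A B (i - 1) v *\<^sub>v \<omega>0) $ 0 \<noteq> 0"
  shows "\<exists>k0::nat. \<forall>N\<ge>1. vec_space.rank N (phi_jacobian n A B C \<omega>0 m k0 N v) = N"
proof -
  interpret Psi_operator n A B
    using assms(2,3) by unfold_locales
  define L where "L = C * B ^\<^sub>m m"
  define c where "c = (\<lambda>a b. sandwich L (Psi_iter a b) \<omega>0 v)"
  have L: "L \<in> carrier_mat 1 n"
    using assms(3,4) by (simp add: L_def)
  have "C * B ^\<^sub>m (m + 1) = C * (B ^\<^sub>m m * B)"
    by simp
  also have "\<dots> = L * B"
    unfolding L_def using assms(3,4) by (intro assoc_mult_mat[symmetric]) auto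
  finally obtain i where "i \<ge> 1" "c (i - 1) 0 \<noteq> 0"
    using assms(6) sandwich_Psi_iter_lead[OF L assms(5)] by (auto simp: c_def)
  then have "binom_comb c i \<noteq> 0"
    using binom_comb_nonzero[of c "i - 1"] by simp
  then obtain k0 where k0:
      "\<forall>N. vec_space.rank N (mat N (k0 + N) (\<lambda>(j, l). poly (binom_comb c (k0 + j - l)) (real l))) = N"
    using rank_staircase[of "binom_comb c"] by auto
  have jacobian: "phi_jacobian n A B C \<omega>0 m k0 N v
      = mat N (k0 + N) (\<lambda>(j, l). poly (binom_comb c (k0 + j - l)) (real l))" for N
    unfolding phi_jacobian_def L_def[symmetric] c_def by (intro eq_matI) (auto simp: deriv_phi[OF L assms(5)])
  show ?thesis
    using k0 by (intro exI[of _ k0]) (simp add: jacobian)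
qed
end
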